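(* Let $0<p<\infty$ and let $m,n\ge1$ be integers. Then there does not exist any continuous map $\tau:\mathbb{R}^m\to\mathbb{R}^n$ such that the composition operator $C_\tau f=f\circ\tau$ is bounded from $L^{p,\infty}(\mathbb{R}^n)$ to $L^\infty(\mathbb{R}^m)$.
   Context: $\mathbb{R}^n,\mathbb{R}^m$ carry Lebesgue measure $|\cdot|$. $L^{p,\infty}(\mathbb{R}^n)$ (weak $L^p$) consists of measurable $f$ with $\|f\|_{L^{p,\infty}}=\sup_{t>0}t\,|\{x:|f(x)|>t\}|^{1/p}<\infty$. Boundedness means $\|C_\tau f\|_{L^\infty(\mathbb{R}^m)}\le C\|f\|_{L^{p,\infty}(\mathbb{R}^n)}$ for some $C$ and all $f\in L^{p,\infty}(\mathbb{R}^n)$. *)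

theory Defs
  imports "HOL-Analysis.Analysis"
begin

text \<open>Weak L^p space on a Euclidean space with Lebesgue measure:
  f is Lebesgue measurable and t |{|f|>t}|^(1/p) is bounded for t>0.\<close>
definition weak_Lp :: "real \<Rightarrow> ('a::euclidean_space \<Rightarrow> real) \<Rightarrow> bool" where
  "weak_Lp p f \<longleftrightarrow> f \<in> borel_measurable lebesgue \<and>
     (\<exists>K. \<forall>t>0. emeasure lebesgue {x. t < \<bar>f x\<bar>} \<le> ennreal ((K / t) powr p))"

definition weak_Lp_norm :: "real \<Rightarrow> ('a::euclidean_space \<Rightarrow> real) \<Rightarrow> real" where
  "weak_Lp_norm p f = (SUP t\<in>{0<..}. t * (measure lebesgue {x. t < \<bar>f x\<bar>}) powr (1 / p))"

end

theory Submission
  imports Defs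
begin

text \<open>The indicator of a small ball around \<open>\<tau> 0\<close> has small weak \<open>L\<^sup>p\<close> norm, namely the
  \<open>1/p\<close>-th power of the volume of the ball. Boundedness of \<open>C\<^sub>\<tau>\<close> would then force
  \<open>f \<circ> \<tau> < 1\<close>, i.e. \<open>\<tau> x \<notin> ball\<close>, for almost every \<open>x\<close>. By continuity of \<open>\<tau>\<close> this holds
  for every \<open>x\<close>, which fails at \<open>x = 0\<close>.\<close>

lemma measure_ball_tendsto_0:
  fixes c :: "'a::euclidean_space"
  shows "((\<lambda>r. measure lebesgue (ball c r)) \<longlongrightarrow> 0) (at_right 0)"
proof -
  have "((\<lambda>r. r ^ DIM('a) * measure lborel (ball (0::'a) 1))
      \<longlongrightarrow> 0 ^ DIM('a) * measure lborel (ball (0::'a) 1)) (at_right 0)"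
    by (intro tendsto_mult_right tendsto_power tendsto_ident_at)
  moreover have "\<forall>\<^sub>F r in at_right 0.
      r ^ DIM('a) * measure lborel (ball (0::'a) 1) = measure lebesgue (ball c r)"
    using eventually_at_right_less[of 0]
  proof (rule eventually_mono)
    fix r :: real assume "0 < r"
    then show "r ^ DIM('a) * measure lborel (ball (0::'a) 1) = measure lebesgue (ball c r)"
      by (simp add: content_ball_conv_unit_ball[of r c] measure_completion)
  qed
  ultimately have "((\<lambda>r. measure lebesgue (ball c r))
      \<longlongrightarrow> 0 ^ DIM('a) * measure lborel (ball (0::'a) 1)) (at_right 0)"
    by (rule Lim_transform_eventually)
  then show ?thesis
    by (simp add: zero_power[OF DIM_positive])
qed

lemma indicator_level_set:
  assumes "0 < t"
  shows "{x. t < (indicator S x :: real)} = (if t < 1 then S else {})"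
  using assms by (auto simp: indicator_def)

lemma weak_Lp_indicator:
  fixes S :: "'a::euclidean_space set"
  assumes "0 < p" and "S \<in> sets lebesgue" and "emeasure lebesgue S < \<infinity>"
  shows "weak_Lp p (indicator S :: 'a \<Rightarrow> real)"
  unfolding weak_Lp_def
proof (intro conjI exI allI impI)
  show "(indicator S :: 'a \<Rightarrow> real) \<in> borel_measurable lebesgue"
    using assms(2) by simp
next
  define K where "K = measure lebesgue S powr (1 / p)"
  fix t :: real
  assume "0 < t"
  show "emeasure lebesgue {x. t < \<bar>indicator S x :: real\<bar>} \<le> ennreal ((K / t) powr p)"
  proof (cases "t < 1")
    case True
    have "emeasure lebesgue S = ennreal (K powr p)"
      using assms by (simp add: K_def powr_powr emeasure_eq_ennreal_measure top.not_eq_extremum)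
    also have "\<dots> \<le> ennreal ((K / t) powr p)"
      using True \<open>0 < t\<close> \<open>0 < p\<close>
      by (intro ennreal_leI powr_mono2) (auto simp: K_def le_divide_eq mult_left_le)
    finally show ?thesis
      using True \<open>0 < t\<close> by (simp add: indicator_level_set)
  qed (use \<open>0 < t\<close> in \<open>simp add: indicator_level_set\<close>)
qed

lemma weak_Lp_norm_indicator:
  fixes S :: "'a::euclidean_space set"
  shows "weak_Lp_norm p (indicator S :: 'a \<Rightarrow> real) = measure lebesgue S powr (1 / p)"
proof -
  define K where "K = measure lebesgue S powr (1 / p)"
  have norm_eq: "weak_Lp_norm p (indicator S :: 'a \<Rightarrow> real)
      = (SUP t\<in>{0<..}. if t < 1 then t * K else 0)"
    unfolding weak_Lp_norm_def by (rule SUP_cong) (auto simp: indicator_level_set K_def)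
  have "K \<ge> 0"
    by (simp add: K_def)
  have bounded: "bdd_above ((\<lambda>t. if t < 1 then t * K else 0) ` {0<..})"
    using \<open>K \<ge> 0\<close> by (intro bdd_aboveI2[of _ _ K]) (auto simp: mult_left_le_one_le)
  have "(SUP t\<in>{0<..}. if t < 1 then t * K else 0) = K"
  proof (rule antisym)
    show "(SUP t\<in>{0<..}. if t < 1 then t * K else 0) \<le> K"
      using \<open>K \<ge> 0\<close> by (intro cSUP_least) (auto simp: mult_left_le_one_le)
    show "K \<le> (SUP t\<in>{0<..}. if t < 1 then t * K else 0)"
    proof (rule field_le_mult_one_interval)
      fix z :: real
      assume "0 < z" "z < 1"
      then show "z * K \<le> (SUP t\<in>{0<..}. if t < 1 then t * K else 0)"
        using cSUP_upper[OF _ bounded, of z] by simp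
    qed
  qed
  then show ?thesis
    by (simp add: norm_eq K_def)
qed

lemma notin_open_if_AE_lebesgue_continuous:
  fixes g :: "'a::euclidean_space \<Rightarrow> 'b::topological_space"
  assumes "continuous_on UNIV g" and "open U" and "AE x in lebesgue. g x \<notin> U"
  shows "g x \<notin> U"
proof -
  have "closed (g -` (- U))"
    using assms(1,2) by (intro closed_vimage) auto
  then show ?thesis
    using mem_closed_if_AE_lebesgue[of "g -` (- U)"] assms(3) by auto
qed

theorem proposition5p5:
  fixes p :: real and \<tau> :: "real^'m \<Rightarrow> real^'n"
  assumes "0 < p" and "continuous_on UNIV \<tau>"
  shows "\<not> (\<exists>C. \<forall>f :: real^'n \<Rightarrow> real. weak_Lp p f \<longrightarrow>
            (AE x in lebesgue. \<bar>f (\<tau> x)\<bar> \<le> C * weak_Lp_norm p f))"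
proof
  assume "\<exists>C. \<forall>f :: real^'n \<Rightarrow> real. weak_Lp p f \<longrightarrow>
            (AE x in lebesgue. \<bar>f (\<tau> x)\<bar> \<le> C * weak_Lp_norm p f)"
  then obtain C where bounded: "\<And>f :: real^'n \<Rightarrow> real. weak_Lp p f \<Longrightarrow>
            AE x in lebesgue. \<bar>f (\<tau> x)\<bar> \<le> C * weak_Lp_norm p f"
    by blast
  have "((\<lambda>r. max C 0 * measure lebesgue (ball (\<tau> 0) r) powr (1 / p)) \<longlongrightarrow> 0) (at_right 0)"
    using \<open>0 < p\<close>
    by (intro tendsto_mult_right_zero tendsto_zero_powrI[OF measure_ball_tendsto_0 tendsto_const]) auto
  then have "\<forall>\<^sub>F r in at_right 0. 0 < r \<and> max C 0 * measure lebesgue (ball (\<tau> 0) r) powr (1 / p) < 1"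
    by (intro eventually_conj eventually_at_right_less order_tendstoD) auto
  then obtain r where "0 < r" and small: "max C 0 * measure lebesgue (ball (\<tau> 0) r) powr (1 / p) < 1"
    using eventually_happens'[OF trivial_limit_at_right_real] by blast
  define f :: "real^'n \<Rightarrow> real" where "f = indicator (ball (\<tau> 0) r)"
  have "C * weak_Lp_norm p f \<le> max C 0 * measure lebesgue (ball (\<tau> 0) r) powr (1 / p)"
    by (simp add: f_def weak_Lp_norm_indicator mult_right_mono)
  with small have "C * weak_Lp_norm p f < 1"
    by linarith
  have "weak_Lp p f"
    unfolding f_def using \<open>0 < p\<close> emeasure_lborel_ball_finite
    by (intro weak_Lp_indicator) (auto simp: emeasure_completion)
  then have "AE x in lebesgue. \<bar>f (\<tau> x)\<bar> \<le> C * weak_Lp_norm p f"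
    by (rule bounded)
  then have "AE x in lebesgue. \<tau> x \<notin> ball (\<tau> 0) r"
    by eventually_elim
      (use \<open>C * weak_Lp_norm p f < 1\<close> in \<open>auto simp: f_def indicator_def split: if_splits\<close>)
  then have "\<tau> 0 \<notin> ball (\<tau> 0) r"
    using assms(2) by (intro notin_open_if_AE_lebesgue_continuous) auto
  then show False
    using \<open>0 < r\<close> by simp
qed

end
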